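(* Let $(F,[\cdot,\cdot,\cdot],a)$ be a Filippov 3-algebroid over a manifold $M$ and $\nabla$ a covariant derivative on it. For sections $s_1,s_2,s_3,s_4\in\Gamma(F)$ define the operator $R(s_1,s_2,s_3,s_4):\Gamma(F)\to\Gamma(F)$ by $$R(s_1,s_2,s_3,s_4)=[\nabla_{s_1\wedge s_2},\nabla_{s_3\wedge s_4}]-\nabla_{[s_1,s_2,s_3]\wedge s_4}-\nabla_{s_3\wedge[s_1,s_2,s_4]}-[\nabla_{s_1\wedge s_4},\nabla_{s_2\wedge s_3}]+\nabla_{[s_1,s_4,s_2]\wedge s_3}+\nabla_{s_2\wedge[s_1,s_4,s_3]}+[\nabla_{s_2\wedge s_4},\nabla_{s_3\wedge s_1}]-\nabla_{[s_2,s_4,s_3]\wedge s_1}-\nabla_{s_3\wedge[s_2,s_4,s_1]}.$$ Then for every $e\in\Gamma(F)$ and $f\in C^\infty(M)$, $R(s_1,s_2,s_3,s_4)(fe)=f\,R(s_1,s_2,s_3,s_4)(e)$; i.e. $R(s_1,s_2,s_3,s_4)$ is a section of the endomorphism bundle of $F$.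
   Context: A Filippov 3-algebroid is a vector bundle $F\to M$ with a trilinear skew-symmetric bracket $[\cdot,\cdot,\cdot]$ on $\Gamma(F)$ and a bundle map $a:\wedge^2F\to TM$ (anchor) such that: $[a(u_1\wedge u_2),a(v_1\wedge v_2)]_L=a([u_1,u_2,v_1]\wedge v_2)+a(v_1\wedge[u_1,u_2,v_2])$; $[v_1,v_2,fu]=f[v_1,v_2,u]+a(v_1\wedge v_2)(f)u$; and $[u_1,u_2,[v_1,v_2,v_3]]=[[u_1,u_2,v_1],v_2,v_3]+[v_1,[u_1,u_2,v_2],v_3]+[v_1,v_2,[u_1,u_2,v_3]]$. Here $[\cdot,\cdot]_L$ is the Lie bracket of vector fields. A covariant derivative is a map $\nabla:\Gamma(F\wedge F)\times\Gamma(F)\to\Gamma(F)$, written $\nabla_{s_1\wedge s_2}s_3$, additive in both arguments, with $\nabla_{f\,s_1\wedge s_2}=f\nabla_{s_1\wedge s_2}$ and $\nabla_{s_1\wedge s_2}(fs_3)=a(s_1\wedge s_2)(f)s_3+f\nabla_{s_1\wedge s_2}s_3$. $[\nabla_A,\nabla_B]=\nabla_A\nabla_B-\nabla_B\nabla_A$. *)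

theory Defs
  imports Main "HOL.Modules"
begin

text \<open>Algebraic model: 'f plays the role of C-infinity(M) (a commutative ring),
  vector fields are derivations of 'f, 's is Gamma(F), 'w is Gamma(F wedge F).\<close>

definition derivation :: "('f::comm_ring_1 \<Rightarrow> 'f) \<Rightarrow> bool" where
  "derivation X \<longleftrightarrow> (\<forall>g h. X (g + h) = X g + X h) \<and> (\<forall>g h. X (g * h) = g * X h + X g * h)"

definition lie_bracket :: "('f::comm_ring_1 \<Rightarrow> 'f) \<Rightarrow> ('f \<Rightarrow> 'f) \<Rightarrow> 'f \<Rightarrow> 'f" where
  "lie_bracket X Y = (\<lambda>g. X (Y g) - Y (X g))"

definition filippov3_algebroid ::
  "('f::comm_ring_1 \<Rightarrow> 's::ab_group_add \<Rightarrow> 's) \<Rightarrow> ('f \<Rightarrow> 'w::ab_group_add \<Rightarrow> 'w)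
   \<Rightarrow> ('s \<Rightarrow> 's \<Rightarrow> 'w) \<Rightarrow> ('s \<Rightarrow> 's \<Rightarrow> 's \<Rightarrow> 's) \<Rightarrow> ('w \<Rightarrow> 'f \<Rightarrow> 'f) \<Rightarrow> bool" where
  "filippov3_algebroid smul wsmul wedge br a \<longleftrightarrow>
     module smul \<and> module wsmul \<and>
     \<comment> \<open>wedge is C-infinity-bilinear and alternating\<close>
     (\<forall>u v w. wedge (u + v) w = wedge u w + wedge v w) \<and>
     (\<forall>u v w. wedge u (v + w) = wedge u v + wedge u w) \<and>
     (\<forall>f u v. wedge (smul f u) v = wsmul f (wedge u v)) \<and>
     (\<forall>f u v. wedge u (smul f v) = wsmul f (wedge u v)) \<and>
     (\<forall>u. wedge u u = 0) \<and>
     \<comment> \<open>anchor: bundle map from wedge^2 F to TM\<close>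
     (\<forall>w. derivation (a w)) \<and>
     (\<forall>w1 w2 g. a (w1 + w2) g = a w1 g + a w2 g) \<and>
     (\<forall>f w g. a (wsmul f w) g = f * a w g) \<and>
     \<comment> \<open>bracket: trilinear (additive) and skew-symmetric\<close>
     (\<forall>u u' v w. br (u + u') v w = br u v w + br u' v w) \<and>
     (\<forall>u v v' w. br u (v + v') w = br u v w + br u v' w) \<and>
     (\<forall>u v w w'. br u v (w + w') = br u v w + br u v w') \<and>
     (\<forall>u v w. br u v w = - br v u w) \<and>
     (\<forall>u v w. br u v w = - br u w v) \<and>
     \<comment> \<open>anchor is compatible with brackets\<close>
     (\<forall>u1 u2 v1 v2. lie_bracket (a (wedge u1 u2)) (a (wedge v1 v2)) =
         (\<lambda>g. a (wedge (br u1 u2 v1) v2) g + a (wedge v1 (br u1 u2 v2)) g)) \<and>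
     \<comment> \<open>Leibniz rule\<close>
     (\<forall>v1 v2 f u. br v1 v2 (smul f u) = smul f (br v1 v2 u) + smul (a (wedge v1 v2) f) u) \<and>
     \<comment> \<open>fundamental identity\<close>
     (\<forall>u1 u2 v1 v2 v3. br u1 u2 (br v1 v2 v3) =
         br (br u1 u2 v1) v2 v3 + br v1 (br u1 u2 v2) v3 + br v1 v2 (br u1 u2 v3))"

definition covariant_derivative ::
  "('f::comm_ring_1 \<Rightarrow> 's::ab_group_add \<Rightarrow> 's) \<Rightarrow> ('f \<Rightarrow> 'w::ab_group_add \<Rightarrow> 'w)
   \<Rightarrow> ('w \<Rightarrow> 'f \<Rightarrow> 'f) \<Rightarrow> ('w \<Rightarrow> 's \<Rightarrow> 's) \<Rightarrow> bool" where
  "covariant_derivative smul wsmul a nabla \<longleftrightarrow>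
     (\<forall>w1 w2 s. nabla (w1 + w2) s = nabla w1 s + nabla w2 s) \<and>
     (\<forall>w s1 s2. nabla w (s1 + s2) = nabla w s1 + nabla w s2) \<and>
     (\<forall>f w s. nabla (wsmul f w) s = smul f (nabla w s)) \<and>
     (\<forall>w f s. nabla w (smul f s) = smul (a w f) s + smul f (nabla w s))"

definition op_comm :: "('s::ab_group_add \<Rightarrow> 's) \<Rightarrow> ('s \<Rightarrow> 's) \<Rightarrow> 's \<Rightarrow> 's" where
  "op_comm P Q = (\<lambda>e. P (Q e) - Q (P e))"

definition curvR ::
  "('s \<Rightarrow> 's \<Rightarrow> 'w) \<Rightarrow> ('s \<Rightarrow> 's \<Rightarrow> 's \<Rightarrow> 's) \<Rightarrow> ('w \<Rightarrow> 's \<Rightarrow> 's::ab_group_add)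
   \<Rightarrow> 's \<Rightarrow> 's \<Rightarrow> 's \<Rightarrow> 's \<Rightarrow> 's \<Rightarrow> 's" where
  "curvR wedge br nabla s1 s2 s3 s4 = (\<lambda>e.
       op_comm (nabla (wedge s1 s2)) (nabla (wedge s3 s4)) e
     - nabla (wedge (br s1 s2 s3) s4) e - nabla (wedge s3 (br s1 s2 s4)) e
     - op_comm (nabla (wedge s1 s4)) (nabla (wedge s2 s3)) e
     + nabla (wedge (br s1 s4 s2) s3) e + nabla (wedge s2 (br s1 s4 s3)) e
     + op_comm (nabla (wedge s2 s4)) (nabla (wedge s3 s1)) e
     - nabla (wedge (br s2 s4 s3) s1) e - nabla (wedge s3 (br s2 s4 s1)) e)"

end

theory Submission
  imports Defs
begin

text \<open>The curvature splits into three cyclic blocks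
  \<open>[\<nabla>\<^bsub>s1\<and>s2\<^esub>, \<nabla>\<^bsub>s3\<and>s4\<^esub>] - \<nabla>\<^bsub>[s1,s2,s3]\<and>s4\<^esub> - \<nabla>\<^bsub>s3\<and>[s1,s2,s4]\<^esub>\<close>.
  Applied to \<open>f e\<close>, the commutator produces the extra term
  \<open>[a(s1\<and>s2), a(s3\<and>s4)](f) e\<close> and the two other summands produce
  \<open>(a([s1,s2,s3]\<and>s4) + a(s3\<and>[s1,s2,s4]))(f) e\<close>; these cancel by the compatibility
  of the anchor with the brackets, so each block, and hence the curvature, is linear over functions.\<close>

definition curvature_block ::
  "('s \<Rightarrow> 's \<Rightarrow> 'w) \<Rightarrow> ('s \<Rightarrow> 's \<Rightarrow> 's \<Rightarrow> 's) \<Rightarrow> ('w \<Rightarrow> 's \<Rightarrow> 's::ab_group_add)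
   \<Rightarrow> 's \<Rightarrow> 's \<Rightarrow> 's \<Rightarrow> 's \<Rightarrow> 's \<Rightarrow> 's" where
  "curvature_block wedge br nabla s1 s2 s3 s4 = (\<lambda>e.
       op_comm (nabla (wedge s1 s2)) (nabla (wedge s3 s4)) e
     - nabla (wedge (br s1 s2 s3) s4) e - nabla (wedge s3 (br s1 s2 s4)) e)"

lemma curvR_eq_curvature_blocks:
  "curvR wedge br nabla s1 s2 s3 s4 e =
     curvature_block wedge br nabla s1 s2 s3 s4 e
   - curvature_block wedge br nabla s1 s4 s2 s3 e
   + curvature_block wedge br nabla s2 s4 s3 s1 e"
  unfolding curvR_def curvature_block_def by (simp add: algebra_simps)

lemma op_comm_covariant_derivative_smul:
  assumes "module smul" and "covariant_derivative smul wsmul a nabla"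
  shows "op_comm (nabla A) (nabla B) (smul f e) =
     smul f (op_comm (nabla A) (nabla B) e) + smul (lie_bracket (a A) (a B) f) e"
proof -
  interpret module smul by (fact assms(1))
  have add: "\<And>w s t. nabla w (s + t) = nabla w s + nabla w t"
   and leibniz: "\<And>w g s. nabla w (smul g s) = smul (a w g) s + smul g (nabla w s)"
    using assms(2) unfolding covariant_derivative_def by blast+
  show ?thesis
    unfolding op_comm_def lie_bracket_def
    by (simp add: leibniz add scale_left_diff_distrib scale_right_diff_distrib algebra_simps)
qed

lemma curvature_block_smul:
  assumes "filippov3_algebroid smul wsmul wedge br a"
    and "covariant_derivative smul wsmul a nabla"
  shows "curvature_block wedge br nabla s1 s2 s3 s4 (smul f e) =
     smul f (curvature_block wedge br nabla s1 s2 s3 s4 e)"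
proof -
  have "module smul"
   and anchor_bracket: "lie_bracket (a (wedge s1 s2)) (a (wedge s3 s4)) f =
      a (wedge (br s1 s2 s3) s4) f + a (wedge s3 (br s1 s2 s4)) f"
    using assms(1) unfolding filippov3_algebroid_def by metis+
  interpret module smul by fact
  have leibniz: "\<And>w g s. nabla w (smul g s) = smul (a w g) s + smul g (nabla w s)"
    using assms(2) unfolding covariant_derivative_def by blast
  show ?thesis
    unfolding curvature_block_def
    using op_comm_covariant_derivative_smul[OF \<open>module smul\<close> assms(2)]
    by (simp add: anchor_bracket leibniz scale_left_distrib scale_right_diff_distrib algebra_simps)
qed

theorem mainTheorem6:
  fixes smul :: "'f::comm_ring_1 \<Rightarrow> 's::ab_group_add \<Rightarrow> 's"
    and wsmul :: "'f \<Rightarrow> 'w::ab_group_add \<Rightarrow> 'w"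
    and wedge :: "'s \<Rightarrow> 's \<Rightarrow> 'w"
    and br :: "'s \<Rightarrow> 's \<Rightarrow> 's \<Rightarrow> 's"
    and a :: "'w \<Rightarrow> 'f \<Rightarrow> 'f"
    and nabla :: "'w \<Rightarrow> 's \<Rightarrow> 's"
  assumes "filippov3_algebroid smul wsmul wedge br a"
    and "covariant_derivative smul wsmul a nabla"
  shows "curvR wedge br nabla s1 s2 s3 s4 (smul f e) = smul f (curvR wedge br nabla s1 s2 s3 s4 e)"
proof -
  have "module smul"
    using assms(1) unfolding filippov3_algebroid_def by blast
  then interpret module smul .
  show ?thesis
    unfolding curvR_eq_curvature_blocks curvature_block_smul[OF assms]
    by (simp add: scale_right_distrib scale_right_diff_distrib)
qed

end
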